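(* Let $\mathfrak{g}_\alpha$, $-1\le\alpha\le1$, be the eight-dimensional real Lie algebras with basis $\{X_1,\dots,X_8\}$ and nonzero brackets $[X_1,X_2]=2X_2$, $[X_1,X_3]=-2X_3$, $[X_2,X_3]=X_1$, $[X_1,X_4]=X_4$, $[X_1,X_5]=-X_5$, $[X_1,X_6]=X_6$, $[X_1,X_7]=-X_7$, $[X_2,X_5]=X_4$, $[X_2,X_7]=X_6$, $[X_3,X_4]=X_5$, $[X_3,X_6]=X_7$, $[X_4,X_8]=X_4$, $[X_5,X_8]=X_5$, $[X_6,X_8]=\alpha X_6$, $[X_7,X_8]=\alpha X_7$, and let $b_2(\mathfrak{g})=\dim H^2(\mathfrak{g},\mathbb{R})$. Then: (i) for $\alpha\ne-1,0$, the (linear) deformations $\mathfrak{g}_{-1}\to\mathfrak{g}_\alpha$ decrease $b_2$ by one, i.e. $b_2(\mathfrak{g}_\alpha)=b_2(\mathfrak{g}_{-1})-1$; (ii) for $\alpha\ne-1,0$ and $\beta\in\{0,-1\}$, the (linear) deformations $\mathfrak{g}_\alpha\to\mathfrak{g}_\beta$ increase $b_2$ by one, i.e. $b_2(\mathfrak{g}_\beta)=b_2(\mathfrak{g}_\alpha)+1$; (iii) the (linear) deformation $\mathfrak{g}_{-1}\to\mathfrak{g}_0$ preserves $b_2$, i.e. $b_2(\mathfrak{g}_0)=b_2(\mathfrak{g}_{-1})$.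
   Context: $H^2(\mathfrak{g},\mathbb{R})$ denotes the second Lie algebra cohomology of $\mathfrak{g}$ with coefficients in the trivial module $\mathbb{R}$. A linear deformation $\mathfrak{g}\to\mathfrak{h}$ means that $\mathfrak{h}$ is isomorphic to a Lie algebra with bracket $[X,Y]+t\varphi(X,Y)$ on the underlying space of $\mathfrak{g}$, for a scalar $t$ and an integrable 2-cocycle $\varphi$ of $\mathfrak{g}$ with values in the adjoint module; for this family, $\mathfrak{g}_\alpha+\varepsilon\varphi$ with $\varphi(X_6,X_8)=X_6$, $\varphi(X_7,X_8)=X_7$ yields $\mathfrak{g}_{\alpha+\varepsilon}$. *)

theory Defs
  imports "HOL-Analysis.Analysis"
begin

definition idx :: "nat \<Rightarrow> 8" where
  "idx k = of_nat (k - 1)"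

definition X :: "nat \<Rightarrow> real^8" where
  "X k = axis (idx k) 1"

definition upbr :: "real \<Rightarrow> nat \<Rightarrow> nat \<Rightarrow> real^8" where
  "upbr \<alpha> i j =
    (if (i, j) = (1, 2) then 2 *\<^sub>R X 2
     else if (i, j) = (1, 3) then (-2) *\<^sub>R X 3
     else if (i, j) = (2, 3) then X 1
     else if (i, j) = (1, 4) then X 4
     else if (i, j) = (1, 5) then - X 5
     else if (i, j) = (1, 6) then X 6
     else if (i, j) = (1, 7) then - X 7
     else if (i, j) = (2, 5) then X 4
     else if (i, j) = (2, 7) then X 6
     else if (i, j) = (3, 4) then X 5
     else if (i, j) = (3, 6) then X 7
     else if (i, j) = (4, 8) then X 4
     else if (i, j) = (5, 8) then X 5
     else if (i, j) = (6, 8) then \<alpha> *\<^sub>R X 6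
     else if (i, j) = (7, 8) then \<alpha> *\<^sub>R X 7
     else 0)"

definition basis_bracket :: "real \<Rightarrow> nat \<Rightarrow> nat \<Rightarrow> real^8" where
  "basis_bracket \<alpha> i j =
    (if i < j then upbr \<alpha> i j else if j < i then - upbr \<alpha> j i else 0)"

definition lie_bracket :: "real \<Rightarrow> real^8 \<Rightarrow> real^8 \<Rightarrow> real^8" where
  "lie_bracket \<alpha> u v =
    (\<Sum>i\<in>{1..8}. \<Sum>j\<in>{1..8}. (u $ idx i * v $ idx j) *\<^sub>R basis_bracket \<alpha> i j)"

text \<open>Bilinear forms on real^8 are represented by matrices M, via
  form M u v = u . (M v).  This is a linear bijection.\<close>

definition form :: "real^8^8 \<Rightarrow> real^8 \<Rightarrow> real^8 \<Rightarrow> real" where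
  "form M u v = u \<bullet> (M *v v)"

definition cocycles2 :: "real \<Rightarrow> (real^8^8) set" where
  "cocycles2 \<alpha> = {M. (\<forall>u v. form M u v = - form M v u) \<and>
     (\<forall>u v w. form M (lie_bracket \<alpha> u v) w + form M (lie_bracket \<alpha> v w) u
              + form M (lie_bracket \<alpha> w u) v = 0)}"

definition coboundaries2 :: "real \<Rightarrow> (real^8^8) set" where
  "coboundaries2 \<alpha> = {M. \<exists>f :: real^8. \<forall>u v. form M u v = f \<bullet> lie_bracket \<alpha> u v}"

definition b2 :: "real \<Rightarrow> nat" where
  "b2 \<alpha> = dim (cocycles2 \<alpha>) - dim (coboundaries2 \<alpha>)"

end

theory Submission
  imports Defs
begin

(* Both the cocycle identity and the coboundary condition are multilinear, so they only need to
   be checked on the basis X_1, ..., X_8; in particular this shows that g_alpha is a Lie algebra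
   and that B^2 is contained in Z^2.  Evaluating the cocycle identity on basis triples shows that
   every 2-cocycle w is, up to a coboundary,
     w(X_4,X_7) (X^4 /\ X^7 - X^5 /\ X^6) + w(X_6,X_7) X^6 /\ X^7,
   where (alpha + 1) w(X_4,X_7) = 0 and alpha w(X_6,X_7) = 0.  Both wedge forms are nonzero on a
   commuting pair of basis vectors, where every coboundary vanishes.  Hence b_2(g_alpha) = 0 for
   alpha not in {0, -1}, while b_2(g_(-1)) = b_2(g_0) = 1. *)

text \<open>The simplifier rewrites \<open>1::nat\<close> to \<open>Suc 0\<close> (\<open>One_nat_def\<close>), hence the second equation.\<close>

lemma idx_simps [simp]:
  "idx 1 = 0" "idx (Suc 0) = 0" "idx 2 = 1" "idx 3 = 2" "idx 4 = 3" "idx 5 = 4" "idx 6 = 5"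
  "idx 7 = 6" "idx 8 = 7"
  by (simp_all add: idx_def)

lemma atLeastAtMost_1_8: "{1..8::nat} = {1,2,3,4,5,6,7,8}"
  by auto

lemma inj_on_idx: "inj_on idx {1..8}"
  unfolding inj_on_def atLeastAtMost_1_8 by (auto simp: idx_def)

lemma idx_surj: "idx ` {1..8} = UNIV"
proof -
  have "a \<in> idx ` {1..8}" for a :: 8
  proof (induct a)
    case (of_int z)
    then have "z \<in> {0,1,2,3,4,5,6,7}" by auto
    then show ?case unfolding atLeastAtMost_1_8 by (auto simp flip: idx_simps)
  qed
  then show ?thesis by blast
qed

lemma X_component: "i \<in> {1..8} \<Longrightarrow> k \<in> {1..8} \<Longrightarrow> X i $ idx k = (if i = k then 1 else 0)"
  using inj_on_idx by (auto simp: X_def axis_def dest: inj_onD)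

lemma Basis_eq_X_image: "(Basis :: (real^8) set) = X ` {1..8}"
proof -
  have "X ` {1..8} = (\<lambda>a. axis a 1) ` idx ` {1..8}"
    by (simp add: X_def image_image)
  also have "\<dots> = range (\<lambda>a. axis a 1)"
    by (simp only: idx_surj)
  also have "\<dots> = Basis"
    by (auto simp: Basis_vec_def Basis_real_def)
  finally show ?thesis ..
qed

lemma form_X_X: "form M (X i) (X j) = M $ idx i $ idx j"
  by (simp add: form_def X_def inner_axis' matrix_vector_mul_component inner_axis)

lemma inner_X_X: "X i \<bullet> X j = (if idx i = idx j then 1 else 0)"
  by (simp add: X_def inner_axis_axis)

lemma lie_bracket_X_X:
  assumes "i \<in> {1..8}" "j \<in> {1..8}"
  shows "lie_bracket \<alpha> (X i) (X j) = basis_bracket \<alpha> i j"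
proof -
  have [simp]: "((if P then 1 else 0) * (if Q then 1 else 0)) *\<^sub>R v
      = (if Q then if P then v else 0 else 0)" for P Q and v :: "real^8"
    by simp
  show ?thesis
    using assms by (simp add: lie_bracket_def X_component sum.delta')
qed

section \<open>Linear algebra\<close>

lemma bilinear_antisym_stdbasis:
  fixes \<phi> :: "'a::euclidean_space \<Rightarrow> 'a \<Rightarrow> 'b::real_vector"
  assumes "bilinear \<phi>" and "\<And>a b. a \<in> Basis \<Longrightarrow> b \<in> Basis \<Longrightarrow> \<phi> a b = - \<phi> b a"
  shows "\<phi> u v = - \<phi> v u"
proof -
  have "bilinear (\<lambda>u v. - \<phi> v u)"
    unfolding bilinear_def linear_iff
    by (simp add: bilinear_ladd[OF assms(1)] bilinear_radd[OF assms(1)]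
        bilinear_lmul[OF assms(1)] bilinear_rmul[OF assms(1)])
  then have "\<phi> = (\<lambda>u v. - \<phi> v u)"
    using bilinear_eq_stdbasis[OF assms(1)] assms(2) by blast
  from fun_cong[OF fun_cong[OF this, of u], of v] show ?thesis
    by simp
qed

lemma cyclic_sum_eq_0_stdbasis:
  fixes br :: "'a::euclidean_space \<Rightarrow> 'a \<Rightarrow> 'a" and \<phi> :: "'a \<Rightarrow> 'a \<Rightarrow> 'b::real_vector"
  assumes br: "bilinear br" and \<phi>: "bilinear \<phi>"
    and basis: "\<And>a b c. a \<in> Basis \<Longrightarrow> b \<in> Basis \<Longrightarrow> c \<in> Basis \<Longrightarrow>
                  \<phi> (br a b) c + \<phi> (br b c) a + \<phi> (br c a) b = 0"
  shows "\<phi> (br u v) w + \<phi> (br v w) u + \<phi> (br w u) v = 0"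
proof -
  define t where "t u v w = \<phi> (br u v) w + \<phi> (br v w) u + \<phi> (br w u) v" for u v w
  note expand = bilinear_ladd[OF br] bilinear_radd[OF br] bilinear_lmul[OF br] bilinear_rmul[OF br]
    bilinear_ladd[OF \<phi>] bilinear_radd[OF \<phi>] bilinear_lmul[OF \<phi>] bilinear_rmul[OF \<phi>]
  have lin: "linear (\<lambda>u. t u v w)" for v w
    unfolding t_def linear_iff by (simp add: expand algebra_simps)
  have bil: "bilinear (t u)" for u
    unfolding t_def bilinear_def linear_iff by (simp add: expand algebra_simps)
  have zero: "bilinear (\<lambda>v w. 0 :: 'b)"
    by (simp add: bilinear_def linear_zero)
  have "t a = (\<lambda>v w. 0)" if "a \<in> Basis" for a
    by (rule bilinear_eq_stdbasis[OF bil zero]) (use basis that in \<open>simp add: t_def\<close>)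
  then have "(\<lambda>u. t u v w) = (\<lambda>u. 0)"
    by (intro linear_eq_stdbasis[OF lin linear_zero]) simp
  from fun_cong[OF this, of u] show ?thesis
    unfolding t_def by simp
qed

lemma subspace_common_zeros:
  fixes L :: "'p \<Rightarrow> 'a::real_vector \<Rightarrow> 'b::real_vector"
  assumes "\<And>p. linear (L p)"
  shows "subspace {x. \<forall>p. L p x = 0}"
  using assms by (auto simp: subspace_def linear_add linear_scale linear_0)

section \<open>The Lie algebras and their cochains\<close>

lemma bilinear_lie_bracket: "bilinear (lie_bracket \<alpha>)"
  unfolding bilinear_def linear_iff lie_bracket_def
  by (auto simp: algebra_simps scaleR_sum_right sum.distrib)

lemma bilinear_form: "bilinear (form M)"
  unfolding bilinear_def linear_iff form_def
  by (auto simp: inner_add_left inner_add_right matrix_vector_right_distrib matrix_vector_mult_scaleR)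

lemma lie_bracket_antisym: "lie_bracket \<alpha> u v = - lie_bracket \<alpha> v u"
proof (rule bilinear_antisym_stdbasis[OF bilinear_lie_bracket])
  fix a b :: "real^8"
  assume "a \<in> Basis" "b \<in> Basis"
  then show "lie_bracket \<alpha> a b = - lie_bracket \<alpha> b a"
    by (auto simp: Basis_eq_X_image lie_bracket_X_X basis_bracket_def)
qed

lemma lie_bracket_jacobi:
  "lie_bracket \<alpha> (lie_bracket \<alpha> u v) w + lie_bracket \<alpha> (lie_bracket \<alpha> v w) u
     + lie_bracket \<alpha> (lie_bracket \<alpha> w u) v = 0"
proof (rule cyclic_sum_eq_0_stdbasis[OF bilinear_lie_bracket bilinear_lie_bracket])
  \<comment> \<open>undo the simplifier's normalisation of \<open>x + x\<close> to the componentwise product \<open>2 * x\<close>\<close>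
  have [simp]: "numeral n * x = numeral n *\<^sub>R x" for n and x :: "real^8"
    by (simp add: vec_eq_iff)
  have "\<forall>i\<in>{1..8}. \<forall>j\<in>{1..8}. \<forall>k\<in>{1..8}.
      lie_bracket \<alpha> (basis_bracket \<alpha> i j) (X k) + lie_bracket \<alpha> (basis_bracket \<alpha> j k) (X i)
        + lie_bracket \<alpha> (basis_bracket \<alpha> k i) (X j) = 0"
    unfolding atLeastAtMost_1_8 ball_simps
    by (simp add: lie_bracket_X_X basis_bracket_def upbr_def bilinear_lmul[OF bilinear_lie_bracket]
        bilinear_lneg[OF bilinear_lie_bracket] bilinear_lzero[OF bilinear_lie_bracket])
  then show "lie_bracket \<alpha> (lie_bracket \<alpha> a b) c + lie_bracket \<alpha> (lie_bracket \<alpha> b c) a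
      + lie_bracket \<alpha> (lie_bracket \<alpha> c a) b = 0"
    if "a \<in> Basis" "b \<in> Basis" "c \<in> Basis" for a b c
    using that by (auto simp: Basis_eq_X_image lie_bracket_X_X)
qed

lemma form_add_matrix: "form (A + B) u v = form A u v + form B u v"
  by (simp add: form_def matrix_vector_mult_add_rdistrib inner_add_right)

lemma form_diff_matrix: "form (A - B) u v = form A u v - form B u v"
  by (simp add: form_def matrix_vector_mult_diff_rdistrib inner_diff_right)

lemma form_scaleR_matrix: "form (c *\<^sub>R A) u v = c * form A u v"
  by (simp add: form_def scaleR_matrix_vector_assoc[symmetric])

lemma cocycles2_iff_basis:
  "M \<in> cocycles2 \<alpha> \<longleftrightarrow>
     (\<forall>i\<in>{1..8}. \<forall>j\<in>{1..8}. form M (X i) (X j) = - form M (X j) (X i)) \<and>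
     (\<forall>i\<in>{1..8}. \<forall>j\<in>{1..8}. \<forall>k\<in>{1..8}.
        form M (basis_bracket \<alpha> i j) (X k) + form M (basis_bracket \<alpha> j k) (X i)
          + form M (basis_bracket \<alpha> k i) (X j) = 0)"
  (is "_ \<longleftrightarrow> ?antisym \<and> ?cyclic")
proof
  assume "M \<in> cocycles2 \<alpha>"
  then have antisym: "\<And>u v. form M u v = - form M v u"
    and cyclic: "\<And>u v w. form M (lie_bracket \<alpha> u v) w + form M (lie_bracket \<alpha> v w) u
                          + form M (lie_bracket \<alpha> w u) v = 0"
    unfolding cocycles2_def by blast+
  have ?cyclic
  proof (intro ballI)
    fix i j k :: nat
    assume "i \<in> {1..8}" "j \<in> {1..8}" "k \<in> {1..8}"
    then show "form M (basis_bracket \<alpha> i j) (X k) + form M (basis_bracket \<alpha> j k) (X i)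
        + form M (basis_bracket \<alpha> k i) (X j) = 0"
      using cyclic[of "X i" "X j" "X k"] by (simp add: lie_bracket_X_X)
  qed
  with antisym show "?antisym \<and> ?cyclic"
    by blast
next
  assume basis: "?antisym \<and> ?cyclic"
  have "form M u v = - form M v u" for u v
    by (rule bilinear_antisym_stdbasis[OF bilinear_form])
      (use basis in \<open>auto simp: Basis_eq_X_image\<close>)
  moreover have "form M (lie_bracket \<alpha> u v) w + form M (lie_bracket \<alpha> v w) u
      + form M (lie_bracket \<alpha> w u) v = 0" for u v w
    by (rule cyclic_sum_eq_0_stdbasis[OF bilinear_lie_bracket bilinear_form])
      (use basis in \<open>auto simp: Basis_eq_X_image lie_bracket_X_X\<close>)
  ultimately show "M \<in> cocycles2 \<alpha>"
    unfolding cocycles2_def by blast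
qed

lemma coboundaries2_if_basis:
  assumes "\<And>i j. i \<in> {1..8} \<Longrightarrow> j \<in> {1..8} \<Longrightarrow> form M (X i) (X j) = f \<bullet> basis_bracket \<alpha> i j"
  shows "M \<in> coboundaries2 \<alpha>"
proof -
  have "bilinear (\<lambda>u v. f \<bullet> lie_bracket \<alpha> u v)"
    unfolding bilinear_def linear_iff
    by (simp add: bilinear_ladd[OF bilinear_lie_bracket] bilinear_radd[OF bilinear_lie_bracket]
        bilinear_lmul[OF bilinear_lie_bracket] bilinear_rmul[OF bilinear_lie_bracket]
        inner_add_right)
  then have "form M = (\<lambda>u v. f \<bullet> lie_bracket \<alpha> u v)"
    by (rule bilinear_eq_stdbasis[OF bilinear_form])
      (use assms in \<open>auto simp: Basis_eq_X_image lie_bracket_X_X\<close>)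
  then show ?thesis
    unfolding coboundaries2_def by auto
qed

lemma coboundary_vanishes_on_commuting:
  assumes "M \<in> coboundaries2 \<alpha>" and "lie_bracket \<alpha> u v = 0"
  shows "form M u v = 0"
  using assms unfolding coboundaries2_def by auto

lemma coboundaries2_subset_cocycles2: "coboundaries2 \<alpha> \<subseteq> cocycles2 \<alpha>"
proof
  fix M
  assume "M \<in> coboundaries2 \<alpha>"
  then obtain f where f: "\<And>u v. form M u v = f \<bullet> lie_bracket \<alpha> u v"
    unfolding coboundaries2_def by blast
  have "form M u v = - form M v u" for u v
    unfolding f by (subst lie_bracket_antisym) simp
  moreover have "form M (lie_bracket \<alpha> u v) w + form M (lie_bracket \<alpha> v w) u
      + form M (lie_bracket \<alpha> w u) v = 0" for u v w
    unfolding f inner_add_right[symmetric] lie_bracket_jacobi by simp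
  ultimately show "M \<in> cocycles2 \<alpha>"
    unfolding cocycles2_def by blast
qed

lemma subspace_cocycles2: "subspace (cocycles2 \<alpha>)"
proof -
  define antisym :: "(real^8) \<times> (real^8) \<Rightarrow> real^8^8 \<Rightarrow> real"
    where "antisym p M = form M (fst p) (snd p) + form M (snd p) (fst p)" for p M
  define cyclic :: "(real^8) \<times> (real^8) \<times> (real^8) \<Rightarrow> real^8^8 \<Rightarrow> real"
    where "cyclic p M = (case p of (u, v, w) \<Rightarrow> form M (lie_bracket \<alpha> u v) w
             + form M (lie_bracket \<alpha> v w) u + form M (lie_bracket \<alpha> w u) v)" for p M
  have eq: "cocycles2 \<alpha> = {M. \<forall>p. antisym p M = 0} \<inter> {M. \<forall>p. cyclic p M = 0}"
    unfolding cocycles2_def antisym_def cyclic_def eq_neg_iff_add_eq_0 by auto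
  have lin: "linear (antisym p)" "linear (cyclic q)" for p q
    unfolding antisym_def cyclic_def
    by (auto simp: linear_iff form_add_matrix form_scaleR_matrix algebra_simps split: prod.split)
  show ?thesis
    unfolding eq by (intro subspace_inter subspace_common_zeros lin)
qed

lemma subspace_coboundaries2: "subspace (coboundaries2 \<alpha>)"
  unfolding subspace_def
proof (intro conjI ballI allI)
  show "0 \<in> coboundaries2 \<alpha>"
    unfolding coboundaries2_def by (auto simp: form_def intro: exI[of _ 0])
next
  fix M N
  assume "M \<in> coboundaries2 \<alpha>" "N \<in> coboundaries2 \<alpha>"
  then obtain f g where "\<And>u v. form M u v = f \<bullet> lie_bracket \<alpha> u v"
    and "\<And>u v. form N u v = g \<bullet> lie_bracket \<alpha> u v"
    unfolding coboundaries2_def by blast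
  then show "M + N \<in> coboundaries2 \<alpha>"
    unfolding coboundaries2_def by (auto simp: form_add_matrix inner_add_left intro: exI[of _ "f + g"])
next
  fix c and M
  assume "M \<in> coboundaries2 \<alpha>"
  then obtain f where "\<And>u v. form M u v = f \<bullet> lie_bracket \<alpha> u v"
    unfolding coboundaries2_def by blast
  then show "c *\<^sub>R M \<in> coboundaries2 \<alpha>"
    unfolding coboundaries2_def by (auto simp: form_scaleR_matrix intro: exI[of _ "c *\<^sub>R f"])
qed

section \<open>Solving the cocycle identity\<close>

lemmas form_left_simps = bilinear_lmul[OF bilinear_form] bilinear_lneg[OF bilinear_form]
  bilinear_lzero[OF bilinear_form]

lemma cocycle_X_X_swap:
  assumes "M \<in> cocycles2 \<alpha>" and "j < i"
  shows "form M (X i) (X j) = - form M (X j) (X i)"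
  using assms(1) unfolding cocycles2_def by blast

lemma cocycle_form_self:
  assumes "M \<in> cocycles2 \<alpha>"
  shows "form M u u = 0"
proof -
  have "form M u u = - form M u u"
    using assms unfolding cocycles2_def by blast
  then show ?thesis
    by simp
qed

lemma cocycle_X_cyclic:
  assumes "M \<in> cocycles2 \<alpha>" and "i \<in> {1..8}" "j \<in> {1..8}" "k \<in> {1..8}"
  shows "form M (basis_bracket \<alpha> i j) (X k) + form M (basis_bracket \<alpha> j k) (X i)
           + form M (basis_bracket \<alpha> k i) (X j) = 0"
  using assms unfolding cocycles2_iff_basis by blast

lemma cocycle_relations:
  assumes M: "M \<in> cocycles2 \<alpha>"
  shows "form M (X 2) (X 5) = form M (X 1) (X 4)"
    and "form M (X 4) (X 8) = form M (X 1) (X 4)"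
    and "form M (X 3) (X 4) = - form M (X 1) (X 5)"
    and "form M (X 5) (X 8) = - form M (X 1) (X 5)"
    and "form M (X 2) (X 7) = form M (X 1) (X 6)"
    and "form M (X 6) (X 8) = \<alpha> * form M (X 1) (X 6)"
    and "form M (X 3) (X 6) = - form M (X 1) (X 7)"
    and "form M (X 7) (X 8) = - (\<alpha> * form M (X 1) (X 7))"
    and "form M (X 5) (X 6) = - form M (X 4) (X 7)"
    and "form M (X 2) (X 4) = 0"
    and "form M (X 2) (X 6) = 0"
    and "form M (X 2) (X 8) = 0"
    and "form M (X 3) (X 5) = 0"
    and "form M (X 3) (X 7) = 0"
    and "form M (X 3) (X 8) = 0"
    and "form M (X 4) (X 6) = 0"
    and "form M (X 5) (X 7) = 0"
    and "form M (X 1) (X 8) = 0"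
    and "form M (X 4) (X 5) = 0"
proof -
  note cyclic = cocycle_X_cyclic[OF M]
  note simps = basis_bracket_def upbr_def form_left_simps cocycle_X_X_swap[OF M]
  from cyclic[of 1 2 5] show "form M (X 2) (X 5) = form M (X 1) (X 4)"
    by (simp add: simps)
  from cyclic[of 1 4 8] show "form M (X 4) (X 8) = form M (X 1) (X 4)"
    by (simp add: simps)
  from cyclic[of 1 3 4] show "form M (X 3) (X 4) = - form M (X 1) (X 5)"
    by (simp add: simps)
  from cyclic[of 1 5 8] show "form M (X 5) (X 8) = - form M (X 1) (X 5)"
    by (simp add: simps)
  from cyclic[of 1 2 7] show "form M (X 2) (X 7) = form M (X 1) (X 6)"
    by (simp add: simps)
  from cyclic[of 1 6 8] show "form M (X 6) (X 8) = \<alpha> * form M (X 1) (X 6)"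
    by (simp add: simps)
  from cyclic[of 1 3 6] show "form M (X 3) (X 6) = - form M (X 1) (X 7)"
    by (simp add: simps)
  from cyclic[of 1 7 8] show "form M (X 7) (X 8) = - (\<alpha> * form M (X 1) (X 7))"
    by (simp add: simps)
  from cyclic[of 2 5 7] show "form M (X 5) (X 6) = - form M (X 4) (X 7)"
    by (simp add: simps)
  from cyclic[of 1 2 4] show "form M (X 2) (X 4) = 0"
    by (simp add: simps)
  from cyclic[of 1 2 6] show "form M (X 2) (X 6) = 0"
    by (simp add: simps)
  from cyclic[of 1 2 8] show "form M (X 2) (X 8) = 0"
    by (simp add: simps)
  from cyclic[of 1 3 5] show "form M (X 3) (X 5) = 0"
    by (simp add: simps)
  from cyclic[of 1 3 7] show "form M (X 3) (X 7) = 0"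
    by (simp add: simps)
  from cyclic[of 1 3 8] show "form M (X 3) (X 8) = 0"
    by (simp add: simps)
  from cyclic[of 1 4 6] show "form M (X 4) (X 6) = 0"
    by (simp add: simps)
  from cyclic[of 1 5 7] show "form M (X 5) (X 7) = 0"
    by (simp add: simps)
  from cyclic[of 2 3 8] show "form M (X 1) (X 8) = 0"
    by (simp add: simps)
  from cyclic[of 4 5 8] show "form M (X 4) (X 5) = 0"
    by (simp add: simps)
qed

lemma cocycle_constraints:
  assumes M: "M \<in> cocycles2 \<alpha>"
  shows "(\<alpha> + 1) * form M (X 4) (X 7) = 0" and "\<alpha> * form M (X 6) (X 7) = 0"
proof -
  note cyclic = cocycle_X_cyclic[OF M]
  note simps = basis_bracket_def upbr_def form_left_simps cocycle_X_X_swap[OF M]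
  from cyclic[of 4 7 8] show "(\<alpha> + 1) * form M (X 4) (X 7) = 0"
    by (simp add: simps algebra_simps)
  from cyclic[of 6 7 8] show "\<alpha> * form M (X 6) (X 7) = 0"
    by (simp add: simps)
qed

definition wedge :: "nat \<Rightarrow> nat \<Rightarrow> real^8^8" where
  "wedge i j =
     (\<chi> a b. if (a, b) = (idx i, idx j) then 1 else if (a, b) = (idx j, idx i) then - 1 else 0)"

lemma form_wedge_X_X:
  "form (wedge i j) (X k) (X l) =
     (if (idx k, idx l) = (idx i, idx j) then 1 else if (idx k, idx l) = (idx j, idx i) then - 1 else 0)"
  by (simp add: form_X_X wedge_def)

text \<open>Each coefficient is read off from a bracket that is a multiple of \<open>X k\<close>:
  \<open>[X 2, X 3] = X 1\<close>, \<open>[X 1, X 2] = 2 X 2\<close>, \<open>[X 1, X 3] = -2 X 3\<close> and \<open>[X 1, X k] = \<plusminus>X k\<close>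
  for \<open>k = 4..7\<close>.\<close>

definition primitive :: "real^8^8 \<Rightarrow> real^8" where
  "primitive M = form M (X 2) (X 3) *\<^sub>R X 1 + (form M (X 1) (X 2) / 2) *\<^sub>R X 2
     - (form M (X 1) (X 3) / 2) *\<^sub>R X 3 + form M (X 1) (X 4) *\<^sub>R X 4 - form M (X 1) (X 5) *\<^sub>R X 5
     + form M (X 1) (X 6) *\<^sub>R X 6 - form M (X 1) (X 7) *\<^sub>R X 7"

lemma cocycle_decomposition:
  assumes M: "M \<in> cocycles2 \<alpha>"
  shows "M - form M (X 4) (X 7) *\<^sub>R (wedge 4 7 - wedge 5 6) - form M (X 6) (X 7) *\<^sub>R wedge 6 7
           \<in> coboundaries2 \<alpha>" (is "?N \<in> _")
proof -
  have "\<forall>i\<in>{1..8}. \<forall>j\<in>{1..8}. form ?N (X i) (X j) = primitive M \<bullet> basis_bracket \<alpha> i j"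
    unfolding atLeastAtMost_1_8 ball_simps
    by (simp add: form_diff_matrix form_scaleR_matrix form_wedge_X_X primitive_def inner_X_X
        inner_add_left inner_diff_left basis_bracket_def upbr_def
        cocycle_relations[OF M, unfolded One_nat_def] cocycle_X_X_swap[OF M] cocycle_form_self[OF M])
  then show ?thesis
    by (intro coboundaries2_if_basis) blast
qed

lemma wedge_47_56_cocycle: "wedge 4 7 - wedge 5 6 \<in> cocycles2 (-1)"
  unfolding cocycles2_iff_basis atLeastAtMost_1_8 ball_simps
  by (simp add: form_diff_matrix form_wedge_X_X basis_bracket_def upbr_def form_left_simps)

lemma wedge_67_cocycle: "wedge 6 7 \<in> cocycles2 0"
  unfolding cocycles2_iff_basis atLeastAtMost_1_8 ball_simps
  by (simp add: form_wedge_X_X basis_bracket_def upbr_def form_left_simps)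

lemma wedge_47_56_not_coboundary: "wedge 4 7 - wedge 5 6 \<notin> coboundaries2 \<alpha>"
proof
  assume "wedge 4 7 - wedge 5 6 \<in> coboundaries2 \<alpha>"
  then have "form (wedge 4 7 - wedge 5 6) (X 4) (X 7) = 0"
    by (rule coboundary_vanishes_on_commuting) (simp add: lie_bracket_X_X basis_bracket_def upbr_def)
  then show False
    by (simp add: form_diff_matrix form_wedge_X_X)
qed

lemma wedge_67_not_coboundary: "wedge 6 7 \<notin> coboundaries2 \<alpha>"
proof
  assume "wedge 6 7 \<in> coboundaries2 \<alpha>"
  then have "form (wedge 6 7) (X 6) (X 7) = 0"
    by (rule coboundary_vanishes_on_commuting) (simp add: lie_bracket_X_X basis_bracket_def upbr_def)
  then show False
    by (simp add: form_wedge_X_X)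
qed

section \<open>Second Betti numbers\<close>

lemma b2_eq_0_if: "cocycles2 \<alpha> \<subseteq> coboundaries2 \<alpha> \<Longrightarrow> b2 \<alpha> = 0"
  unfolding b2_def by (simp add: dim_subset)

lemma b2_eq_1_if:
  assumes W: "W \<in> cocycles2 \<alpha>" "W \<notin> coboundaries2 \<alpha>"
    and decomp: "\<And>M. M \<in> cocycles2 \<alpha> \<Longrightarrow> \<exists>c. M - c *\<^sub>R W \<in> coboundaries2 \<alpha>"
  shows "b2 \<alpha> = 1"
proof -
  have "cocycles2 \<alpha> = span (insert W (coboundaries2 \<alpha>))"
  proof
    show "cocycles2 \<alpha> \<subseteq> span (insert W (coboundaries2 \<alpha>))"
    proof
      fix M
      assume "M \<in> cocycles2 \<alpha>"
      then obtain c where "M - c *\<^sub>R W \<in> coboundaries2 \<alpha>"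
        using decomp by blast
      then have "c *\<^sub>R W + (M - c *\<^sub>R W) \<in> span (insert W (coboundaries2 \<alpha>))"
        by (intro span_add span_scale span_base) auto
      then show "M \<in> span (insert W (coboundaries2 \<alpha>))"
        by simp
    qed
    show "span (insert W (coboundaries2 \<alpha>)) \<subseteq> cocycles2 \<alpha>"
      using W(1) coboundaries2_subset_cocycles2 subspace_cocycles2 by (intro span_minimal) auto
  qed
  moreover have "W \<notin> span (coboundaries2 \<alpha>)"
    using W(2) by (simp add: span_eq_iff[THEN iffD2, OF subspace_coboundaries2])
  ultimately show ?thesis
    unfolding b2_def by (simp add: dim_insert)
qed

lemma b2_generic: "\<alpha> \<noteq> 0 \<Longrightarrow> \<alpha> \<noteq> -1 \<Longrightarrow> b2 \<alpha> = 0"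
proof (intro b2_eq_0_if subsetI)
  fix M
  assume "\<alpha> \<noteq> 0" "\<alpha> \<noteq> -1" and M: "M \<in> cocycles2 \<alpha>"
  then have "form M (X 4) (X 7) = 0" "form M (X 6) (X 7) = 0"
    using cocycle_constraints[OF M] by auto
  then show "M \<in> coboundaries2 \<alpha>"
    using cocycle_decomposition[OF M] by simp
qed

lemma b2_minus_one: "b2 (-1) = 1"
proof (rule b2_eq_1_if[OF wedge_47_56_cocycle wedge_47_56_not_coboundary])
  fix M
  assume M: "M \<in> cocycles2 (-1)"
  then have "form M (X 6) (X 7) = 0"
    using cocycle_constraints(2)[OF M] by simp
  then show "\<exists>c. M - c *\<^sub>R (wedge 4 7 - wedge 5 6) \<in> coboundaries2 (-1)"
    using cocycle_decomposition[OF M] by auto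
qed

lemma b2_zero: "b2 0 = 1"
proof (rule b2_eq_1_if[OF wedge_67_cocycle wedge_67_not_coboundary])
  fix M
  assume M: "M \<in> cocycles2 0"
  then have "form M (X 4) (X 7) = 0"
    using cocycle_constraints(1)[OF M] by simp
  then show "\<exists>c. M - c *\<^sub>R wedge 6 7 \<in> coboundaries2 0"
    using cocycle_decomposition[OF M] by auto
qed

theorem proposition3:
  shows "(\<forall>\<alpha>::real. -1 \<le> \<alpha> \<and> \<alpha> \<le> 1 \<and> \<alpha> \<noteq> -1 \<and> \<alpha> \<noteq> 0 \<longrightarrow>
            b2 \<alpha> + 1 = b2 (-1))
       \<and> (\<forall>\<alpha>::real. \<forall>\<beta>::real. -1 \<le> \<alpha> \<and> \<alpha> \<le> 1 \<and> \<alpha> \<noteq> -1 \<and> \<alpha> \<noteq> 0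
            \<and> \<beta> \<in> {0, -1} \<longrightarrow> b2 \<beta> = b2 \<alpha> + 1)
       \<and> b2 0 = b2 (-1)"
  using b2_generic b2_minus_one b2_zero by auto

end
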